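(* For all positive integers $n\geq 2$ and $t$, the domination number of the Sierpiński graph $S(K_n,t)$ is $$\gamma(S(K_n,t))=\left\lceil\frac{n^t}{n+1}\right\rceil.$$
   Context: For a positive integer $n$ let $[n]=\{1,\dots,n\}$. For positive integers $n,t$, the Sierpiński graph $S(K_n,t)$ is the simple graph with vertex set $[n]^t$ (words $v_1v_2\cdots v_t$ with $v_i\in[n]$), in which $u_1\cdots u_t$ and $v_1\cdots v_t$ are adjacent if and only if there is $s\in[t]$ with $u_j=v_j$ for all $j<s$, $u_s\neq v_s$, and $u_j=v_s$ and $v_j=u_s$ for all $j>s$. A set $D$ of vertices of a graph $G$ is dominating if every vertex of $G$ lies in $D$ or is adjacent to a vertex of $D$; the domination number $\gamma(G)$ is the minimum size of a dominating set. *)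

theory Defs
  imports Complex_Main
begin

text \<open>Vertices of the Sierpinski graph S(K_n,t): words of length t over [n] = {1..n},
  represented as lists (index i of the list = letter v_(i+1)).\<close>

definition sierp_vertices :: "nat \<Rightarrow> nat \<Rightarrow> nat list set" where
  "sierp_vertices n t = {v. length v = t \<and> set v \<subseteq> {1..n}}"

definition sierp_adj :: "nat \<Rightarrow> nat \<Rightarrow> nat list \<Rightarrow> nat list \<Rightarrow> bool" where
  "sierp_adj n t u v \<longleftrightarrow> u \<in> sierp_vertices n t \<and> v \<in> sierp_vertices n t \<and>
     (\<exists>s<t. (\<forall>j<s. u ! j = v ! j) \<and> u ! s \<noteq> v ! s \<and>
            (\<forall>j. s < j \<and> j < t \<longrightarrow> u ! j = v ! s \<and> v ! j = u ! s))"

definition dominating :: "'a set \<Rightarrow> ('a \<Rightarrow> 'a \<Rightarrow> bool) \<Rightarrow> 'a set \<Rightarrow> bool" where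
  "dominating V E D \<longleftrightarrow> D \<subseteq> V \<and> (\<forall>x\<in>V. x \<in> D \<or> (\<exists>d\<in>D. E x d))"

definition domination_number :: "'a set \<Rightarrow> ('a \<Rightarrow> 'a \<Rightarrow> bool) \<Rightarrow> nat" where
  "domination_number V E = (LEAST k. \<exists>D. dominating V E D \<and> finite D \<and> card D = k)"

end

theory Submission
  imports Defs
begin

text \<open>
  Every vertex of \<open>S(K_n,t)\<close> has at most \<open>n\<close> neighbours, so a dominating set needs at least
  \<open>n^t/(n+1)\<close> vertices. For the matching upper bound, read a word left to right keeping a state
  that is either free or waiting for a letter \<open>a\<close>: a free state starts waiting for the letter just
  read, and a waiting state becomes free when its letter reappears. The words ending free, started
  free for even \<open>t\<close> and waiting for \<open>1\<close> for odd \<open>t\<close>, form a dominating set: viewing \<open>S(K_n,t)\<close>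
  as \<open>n\<close> copies of \<open>S(K_n,t-1)\<close> joined by bridge edges \<open>ij\<dots>j \<sim> ji\<dots>i\<close>, the only vertices
  not dominated inside their copy are extreme ones, and these are dominated across a bridge.
  Counting these words along the same recursion, \<open>n+1\<close> times their number is \<open>n^t+n\<close> for even
  \<open>t\<close> and \<open>n^t+1\<close> for odd \<open>t\<close>, i.e. their number is \<open>\<lceil>n^t/(n+1)\<rceil>\<close>.
\<close>

lemma finite_sierp_vertices: "finite (sierp_vertices n t)"
  using finite_lists_length_eq[of "{1..n}" t] by (simp add: sierp_vertices_def conj_commute)

lemma card_sierp_vertices: "card (sierp_vertices n t) = n ^ t"
  using card_lists_length_eq[of "{1..n}" t] by (simp add: sierp_vertices_def conj_commute)

lemma Cons_in_sierp_vertices: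
  "i # x \<in> sierp_vertices n (Suc t) \<longleftrightarrow> i \<in> {1..n} \<and> x \<in> sierp_vertices n t"
  by (auto simp: sierp_vertices_def)

lemma sierp_vertices_0: "sierp_vertices n 0 = {[]}"
  by (auto simp: sierp_vertices_def)

lemma sierp_vertices_Suc: "sierp_vertices n (Suc t) = (\<Union>i\<in>{1..n}. Cons i ` sierp_vertices n t)"
  by (auto simp: sierp_vertices_def length_Suc_conv)

lemma sierp_adj_in_vertices:
  "sierp_adj n t u v \<Longrightarrow> u \<in> sierp_vertices n t \<and> v \<in> sierp_vertices n t"
  by (simp add: sierp_adj_def)

lemma not_sierp_adj_0: "\<not> sierp_adj n 0 u v"
  by (simp add: sierp_adj_def)

lemma sierp_adj_Cons_Cons:
  "sierp_adj n (Suc t) (i # x) (j # y) \<longleftrightarrow>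
     (i = j \<and> i \<in> {1..n} \<and> sierp_adj n t x y) \<or>
     (i \<noteq> j \<and> i \<in> {1..n} \<and> j \<in> {1..n} \<and> x = replicate t j \<and> y = replicate t i)"
    (is "?adj \<longleftrightarrow> ?inner \<or> ?bridge")
proof
  assume ?adj
  then have V: "i \<in> {1..n}" "j \<in> {1..n}" "x \<in> sierp_vertices n t" "y \<in> sierp_vertices n t"
    by (auto simp: sierp_adj_def Cons_in_sierp_vertices)
  from \<open>?adj\<close> obtain s where s: "s < Suc t" "\<forall>k<s. (i#x) ! k = (j#y) ! k"
      "(i#x) ! s \<noteq> (j#y) ! s"
      "\<forall>k. s < k \<and> k < Suc t \<longrightarrow> (i#x) ! k = (j#y) ! s \<and> (j#y) ! k = (i#x) ! s"
    unfolding sierp_adj_def by blast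
  show "?inner \<or> ?bridge"
  proof (cases s)
    case 0
    have "x ! k = j \<and> y ! k = i" if "k < t" for k
      using s(4)[rule_format, of "Suc k"] that 0 by simp
    moreover have "length x = t" "length y = t"
      using V by (simp_all add: sierp_vertices_def)
    ultimately have "?bridge"
      using s(3) V 0 by (auto intro!: replicate_eqI simp: in_set_conv_nth)
    then show ?thesis ..
  next
    case (Suc s')
    have "i = j" using s(2) Suc by auto
    moreover have "sierp_adj n t x y"
      unfolding sierp_adj_def
    proof (intro conjI exI[of _ s'])
      show "\<forall>k<s'. x ! k = y ! k"
        using s(2) Suc by (metis Suc_mono nth_Cons_Suc)
      show "\<forall>k. s' < k \<and> k < t \<longrightarrow> x ! k = y ! s' \<and> y ! k = x ! s'"
        using s(4) Suc by (metis Suc_mono nth_Cons_Suc)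
    qed (use V s Suc in auto)
    ultimately show ?thesis using V by blast
  qed
next
  assume "?inner \<or> ?bridge"
  then show ?adj
  proof
    assume ?inner
    then obtain s where s: "s < t" "\<forall>k<s. x ! k = y ! k" "x ! s \<noteq> y ! s"
        "\<forall>k. s < k \<and> k < t \<longrightarrow> x ! k = y ! s \<and> y ! k = x ! s"
      and V: "i = j" "i \<in> {1..n}" "x \<in> sierp_vertices n t" "y \<in> sierp_vertices n t"
      unfolding sierp_adj_def by blast
    show ?adj
      unfolding sierp_adj_def
    proof (intro conjI exI[of _ "Suc s"])
      show "\<forall>k<Suc s. (i#x) ! k = (j#y) ! k"
        using s(2) V(1) by (auto simp: less_Suc_eq_0_disj)
      show "\<forall>k. Suc s < k \<and> k < Suc t \<longrightarrow>
          (i#x) ! k = (j#y) ! Suc s \<and> (j#y) ! k = (i#x) ! Suc s"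
      proof (intro allI impI)
        fix k assume "Suc s < k \<and> k < Suc t"
        then obtain k' where "k = Suc k'" "s < k'" "k' < t" by (cases k) auto
        then show "(i#x) ! k = (j#y) ! Suc s \<and> (j#y) ! k = (i#x) ! Suc s"
          using s(4) by simp
      qed
    qed (use V s in \<open>auto simp: Cons_in_sierp_vertices\<close>)
  next
    assume ?bridge
    then show ?adj
      unfolding sierp_adj_def
      by (intro conjI exI[of _ 0]) (auto simp: sierp_vertices_def nth_Cons')
  qed
qed

lemma sierp_neighbours_Cons:
  assumes "i \<in> {1..n}"
  shows "{x. sierp_adj n (Suc t) x (i # w)} =
     Cons i ` {x. sierp_adj n t x w} \<union>
     {j # replicate t i | j. j \<noteq> i \<and> j \<in> {1..n} \<and> w = replicate t j}"
    (is "_ = ?rhs")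
proof -
  have "x \<in> ?rhs" if adj: "sierp_adj n (Suc t) x (i # w)" for x
  proof -
    obtain j y where "x = j # y"
      using sierp_adj_in_vertices[OF adj] by (cases x) (auto simp: sierp_vertices_def)
    then show ?thesis using adj by (auto simp: sierp_adj_Cons_Cons)
  qed
  then show ?thesis
    using assms by (auto simp: sierp_adj_Cons_Cons)
qed

lemma card_sierp_neighbours:
  assumes "d \<in> sierp_vertices n t"
  shows "card {x. sierp_adj n t x d} \<le> (if \<exists>c. d = replicate t c then n - 1 else n)"
  using assms
proof (induction t arbitrary: d)
  case 0
  then show ?case by (simp add: not_sierp_adj_0)
next
  case (Suc t)
  then obtain i w where d: "d = i # w" and i: "i \<in> {1..n}" and w: "w \<in> sierp_vertices n t"
    by (cases d) (auto simp: sierp_vertices_def Cons_in_sierp_vertices)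
  define B where "B = {j # replicate t i | j. j \<noteq> i \<and> j \<in> {1..n} \<and> w = replicate t j}"
  have "card {x. sierp_adj n (Suc t) x d} \<le> card (Cons i ` {x. sierp_adj n t x w}) + card B"
    unfolding d sierp_neighbours_Cons[OF i] B_def by (rule card_Un_le)
  also have "\<dots> \<le> card {x. sierp_adj n t x w} + card B"
    by (simp add: card_image)
  finally have le: "card {x. sierp_adj n (Suc t) x d} \<le> card {x. sierp_adj n t x w} + card B" .
  have IH: "card {x. sierp_adj n t x w} \<le> (if \<exists>c. w = replicate t c then n - 1 else n)"
    using Suc.IH[OF w] .
  consider (zero) "t = 0"
    | (const) c where "t > 0" "w = replicate t c"
    | (nonconst) "\<nexists>c. w = replicate t c"
    by blast
  then show ?case
  proof cases
    case zero
    have "B = (\<lambda>j. [j]) ` ({1..n} - {i})"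
      using zero w by (auto simp: B_def sierp_vertices_0)
    then have "card B \<le> card ({1..n} - {i})"
      by (simp add: card_image_le)
    also have "\<dots> = n - 1"
      using i by simp
    finally have "card B \<le> n - 1" .
    then show ?thesis using le zero w by (simp add: d not_sierp_adj_0 sierp_vertices_0)
  next
    case const
    have B: "B \<subseteq> {c # replicate t i}"
      using const(1) by (auto simp: B_def const(2) replicate_eq_replicate)
    show ?thesis
    proof (cases "c = i")
      case True
      then have "B = {}" using B by (auto simp: B_def const(2) replicate_eq_replicate)
      then show ?thesis using le IH const True d by auto
    next
      case False
      have "card B \<le> 1" using card_mono[OF _ B] by simp
      moreover have "\<nexists>c'. d = replicate (Suc t) c'"
        using False const by (auto simp: d replicate_eq_replicate)
      ultimately show ?thesis using le IH const i by auto
    qed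
  next
    case nonconst
    then have "B = {}" by (auto simp: B_def)
    moreover have "\<nexists>c. d = replicate (Suc t) c" using nonconst by (auto simp: d)
    ultimately show ?thesis using le IH nonconst by auto
  qed
qed

lemma card_le_dominating:
  assumes dom: "dominating V E D" and "finite V" and deg: "\<forall>d\<in>D. card {x\<in>V. E x d} \<le> k"
  shows "card V \<le> (k + 1) * card D"
proof -
  have "D \<subseteq> V" using dom by (simp add: dominating_def)
  then have fin: "finite D" "\<And>d. finite (insert d {x\<in>V. E x d})"
    using \<open>finite V\<close> finite_subset by auto
  have "V \<subseteq> (\<Union>d\<in>D. insert d {x\<in>V. E x d})"
    using dom by (auto simp: dominating_def)
  then have "card V \<le> card (\<Union>d\<in>D. insert d {x\<in>V. E x d})"
    using fin by (intro card_mono) auto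
  also have "\<dots> \<le> (\<Sum>d\<in>D. card (insert d {x\<in>V. E x d}))"
    by (rule card_UN_le[OF fin(1)])
  also have "\<dots> \<le> (\<Sum>d\<in>D. k + 1)"
  proof (rule sum_mono)
    fix d assume "d \<in> D"
    then show "card (insert d {x\<in>V. E x d}) \<le> k + 1"
      using deg by (intro card_insert_le_m1) auto
  qed
  finally show ?thesis by (simp add: mult.commute)
qed

lemma card_sierp_neighbours_le:
  assumes "d \<in> sierp_vertices n t"
  shows "card {x \<in> sierp_vertices n t. sierp_adj n t x d} \<le> n"
proof -
  have "{x \<in> sierp_vertices n t. sierp_adj n t x d} = {x. sierp_adj n t x d}"
    by (auto dest: sierp_adj_in_vertices)
  then show ?thesis
    using card_sierp_neighbours[OF assms] by (simp split: if_splits)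
qed

lemma card_dominating_sierp_lower:
  assumes "dominating (sierp_vertices n t) (sierp_adj n t) D"
  shows "n ^ t \<le> (n + 1) * card D"
proof -
  have "\<forall>d\<in>D. card {x \<in> sierp_vertices n t. sierp_adj n t x d} \<le> n"
    using assms card_sierp_neighbours_le by (auto simp: dominating_def)
  then show ?thesis
    using card_le_dominating[OF assms finite_sierp_vertices] by (simp add: card_sierp_vertices)
qed

text \<open>\<open>None\<close> is the free state, \<open>Some a\<close> waits for the letter \<open>a\<close>.\<close>

fun code_step :: "nat option \<Rightarrow> nat \<Rightarrow> nat option" where
  "code_step None i = Some i"
| "code_step (Some a) i = (if i = a then None else Some a)"

definition sierp_code :: "nat \<Rightarrow> nat \<Rightarrow> nat option \<Rightarrow> nat list set" where
  "sierp_code n t p = {w \<in> sierp_vertices n t. foldl code_step p w = None}"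

lemma foldl_code_step_replicate_other:
  "a \<noteq> b \<Longrightarrow> foldl code_step (Some a) (replicate t b) = Some a"
  by (induction t) auto

lemma foldl_code_step_replicate:
  "foldl code_step None (replicate t b) = (if even t then None else Some b)"
  "foldl code_step (Some b) (replicate t b) = (if even t then Some b else None)"
  by (induction t) auto

lemma code_step_bridge:
  assumes "i \<noteq> b" "foldl code_step (code_step p i) (replicate t b) = Some b"
  shows "foldl code_step (code_step p b) (replicate t i) = None"
proof (cases p)
  case None
  then show ?thesis
    using assms foldl_code_step_replicate_other[of i b t] by simp
next
  case (Some a)
  then show ?thesis
    using assms foldl_code_step_replicate_other[of a b t]
    by (cases "i = a"; cases "a = b") (auto simp: foldl_code_step_replicate split: if_splits)
qed

lemma sierp_code_dominates:
  assumes "v \<in> sierp_vertices n t" "set_option p \<subseteq> {1..n}"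
  shows "foldl code_step p v = None \<or> (\<exists>u. sierp_adj n t v u \<and> foldl code_step p u = None) \<or>
    (\<exists>b. v = replicate t b \<and> foldl code_step p v = Some b)"
  using assms
proof (induction t arbitrary: v p)
  case 0
  then show ?case by (cases p) (auto simp: sierp_vertices_0)
next
  case (Suc t)
  from Suc.prems(1) obtain i w
    where v: "v = i # w" and i: "i \<in> {1..n}" and w: "w \<in> sierp_vertices n t"
    by (cases v) (auto simp: sierp_vertices_def Cons_in_sierp_vertices)
  have p': "set_option (code_step p i) \<subseteq> {1..n}"
    using Suc.prems(2) i by (cases p) auto
  from Suc.IH[OF w p'] consider
      (in_code) "foldl code_step (code_step p i) w = None"
    | (inner) u where "sierp_adj n t w u" "foldl code_step (code_step p i) u = None"
    | (extreme) b where "w = replicate t b" "foldl code_step (code_step p i) w = Some b"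
    by metis
  then show ?case
  proof cases
    case in_code
    then show ?thesis by (simp add: v)
  next
    case inner
    then have "sierp_adj n (Suc t) v (i # u)" using i by (simp add: v sierp_adj_Cons_Cons)
    with inner show ?thesis by auto
  next
    case extreme
    show ?thesis
    proof (cases "i = b")
      case True
      then show ?thesis using extreme by (simp add: v)
    next
      case False
      have "b \<in> {1..n}"
      proof (cases t)
        case 0
        then show ?thesis using extreme p' by simp
      next
        case (Suc t')
        then show ?thesis using extreme w by (auto simp: sierp_vertices_def)
      qed
      then have "sierp_adj n (Suc t) v (b # replicate t i)"
        using False extreme i by (simp add: v sierp_adj_Cons_Cons)
      moreover have "foldl code_step p (b # replicate t i) = None"
        using code_step_bridge[OF False] extreme by simp
      ultimately show ?thesis by blast
    qed
  qed
qed

lemma sierp_code_Suc: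
  "sierp_code n (Suc t) p = (\<Union>i\<in>{1..n}. Cons i ` sierp_code n t (code_step p i))"
  by (auto simp: sierp_code_def sierp_vertices_Suc)

lemma card_sierp_code_Suc:
  "card (sierp_code n (Suc t) p) = (\<Sum>i=1..n. card (sierp_code n t (code_step p i)))"
proof -
  have "finite (sierp_code n t q)" for q
    using finite_sierp_vertices by (simp add: sierp_code_def)
  then show ?thesis
    unfolding sierp_code_Suc by (subst card_UN_disjoint) (auto simp: card_image)
qed

lemma card_sierp_code:
  "int (card (sierp_code n t None)) * (int n + 1) = int n ^ t + int n * (-1) ^ t \<and>
   (\<forall>a\<in>{1..n}. int (card (sierp_code n t (Some a))) * (int n + 1) = int n ^ t - (-1) ^ t)"
proof (induction t)
  case 0
  have "sierp_code n 0 None = {[]}" "\<And>a. sierp_code n 0 (Some a) = {}"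
    by (auto simp: sierp_code_def sierp_vertices_0)
  then show ?case by simp
next
  case (Suc t)
  define c0 where "c0 = int (card (sierp_code n t None))"
  define c1 where "c1 a = int (card (sierp_code n t (Some a)))" for a
  have IH0: "c0 * (int n + 1) = int n ^ t + int n * (-1) ^ t"
    and IH1: "\<And>a. a \<in> {1..n} \<Longrightarrow> c1 a * (int n + 1) = int n ^ t - (-1) ^ t"
    using Suc.IH by (simp_all add: c0_def c1_def)
  have "int (card (sierp_code n (Suc t) None)) * (int n + 1) = (\<Sum>i=1..n. c1 i * (int n + 1))"
    by (simp add: card_sierp_code_Suc c1_def sum_distrib_right)
  also have "\<dots> = (\<Sum>i=1..n. int n ^ t - (-1) ^ t)"
    by (rule sum.cong) (simp_all add: IH1)
  also have "\<dots> = int n ^ Suc t + int n * (-1) ^ Suc t"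
    by (simp add: algebra_simps)
  finally have None: "int (card (sierp_code n (Suc t) None)) * (int n + 1) =
      int n ^ Suc t + int n * (-1) ^ Suc t" .
  have Some: "int (card (sierp_code n (Suc t) (Some a))) * (int n + 1) = int n ^ Suc t - (-1) ^ Suc t"
    if a: "a \<in> {1..n}" for a
  proof -
    have "int (card (sierp_code n (Suc t) (Some a))) = (\<Sum>i\<in>{1..n}. if i = a then c0 else c1 a)"
      by (simp add: card_sierp_code_Suc c0_def c1_def if_distrib cong: if_cong)
    also have "\<dots> = c0 + (int n - 1) * c1 a"
      using a by (simp add: sum.If_cases Int_absorb1 Diff_eq[symmetric] of_nat_diff)
    finally have "int (card (sierp_code n (Suc t) (Some a))) * (int n + 1) =
        (c0 + (int n - 1) * c1 a) * (int n + 1)"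
      by simp
    also have "\<dots> = c0 * (int n + 1) + (int n - 1) * (c1 a * (int n + 1))"
      by (simp add: algebra_simps)
    also have "\<dots> = int n ^ Suc t - (-1) ^ Suc t"
      by (simp only: IH0 IH1[OF a]) (simp add: algebra_simps)
    finally show ?thesis .
  qed
  from None Some show ?case by blast
qed

lemma dominating_sierp_code:
  assumes "n \<ge> 1"
  shows "dominating (sierp_vertices n t) (sierp_adj n t)
           (sierp_code n t (if even t then None else Some 1))"
    (is "dominating ?V ?E (sierp_code n t ?p)")
proof -
  have no_extreme: "foldl code_step ?p (replicate t b) \<noteq> Some b" for b
    using foldl_code_step_replicate_other[of 1 b t]
    by (cases "b = 1") (auto simp: foldl_code_step_replicate)
  have "x \<in> sierp_code n t ?p \<or> (\<exists>d\<in>sierp_code n t ?p. ?E x d)" if x: "x \<in> ?V" for x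
  proof -
    have "set_option ?p \<subseteq> {1..n}" using assms by simp
    from sierp_code_dominates[OF x this] no_extreme
    consider "foldl code_step ?p x = None" | u where "?E x u" "foldl code_step ?p u = None"
      by metis
    then show ?thesis
      by cases (use x in \<open>auto simp: sierp_code_def dest: sierp_adj_in_vertices\<close>)
  qed
  then show ?thesis
    by (auto simp: dominating_def sierp_code_def)
qed

lemma card_sierp_code_parity:
  assumes "n \<ge> 1"
  shows "int (card (sierp_code n t (if even t then None else Some 1))) * (int n + 1) =
           int n ^ t + (if even t then int n else 1)"
  using card_sierp_code[of n t] assms by auto

lemma ceiling_divide_eqI:
  fixes x a :: real and k :: int
  assumes "a \<ge> 0" "x \<le> of_int k * (a + 1)" "of_int k * (a + 1) \<le> x + a"
  shows "ceiling (x / (a + 1)) = k"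
proof (rule ceiling_unique)
  have "a + 1 > 0" using assms(1) by simp
  moreover have "(of_int k - 1) * (a + 1) < x" using assms(3) by (simp add: algebra_simps)
  ultimately show "x / (a + 1) \<le> of_int k" "of_int k - 1 < x / (a + 1)"
    using assms(2) by (simp_all add: divide_le_eq less_divide_eq)
qed

theorem theorem3p1:
  fixes n t :: nat
  assumes "n \<ge> 2" and "t \<ge> 1"
  shows "int (domination_number (sierp_vertices n t) (sierp_adj n t))
           = ceiling (real n ^ t / (real n + 1))"
proof -
  let ?V = "sierp_vertices n t" and ?E = "sierp_adj n t"
  define D0 where "D0 = sierp_code n t (if even t then None else Some 1)"
  have dom: "dominating ?V ?E D0" and fin: "finite D0"
    using dominating_sierp_code[of n t] assms finite_sierp_vertices[of n t]
    by (simp_all add: D0_def sierp_code_def)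
  have "real (card D0) * (real n + 1) = real n ^ t + (if even t then real n else 1)"
    using arg_cong[OF card_sierp_code_parity[of n t], of real_of_int] assms by (simp add: D0_def)
  then have ceil: "ceiling (real n ^ t / (real n + 1)) = int (card D0)"
    using assms(1) by (intro ceiling_divide_eqI) (auto split: if_splits)
  have "domination_number ?V ?E = card D0"
    unfolding domination_number_def
  proof (rule Least_equality)
    fix k assume "\<exists>D. dominating ?V ?E D \<and> finite D \<and> card D = k"
    then obtain D where "dominating ?V ?E D" "card D = k" by blast
    then have "real (n ^ t) \<le> real ((n + 1) * k)"
      using card_dominating_sierp_lower[of n t D] by (simp only: of_nat_le_iff)
    then have "real n ^ t / (real n + 1) \<le> real k"
      by (simp add: divide_le_eq algebra_simps)
    then show "card D0 \<le> k"
      using ceil by (metis ceiling_le of_int_of_nat_eq of_nat_le_iff)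
  qed (use dom fin in blast)
  with ceil show ?thesis by simp
qed

end
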